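(* Let $p\ge 7$ be a prime. Then $$\sum_{k=1}^{p-1}\frac{H_k^2}{k^2}\equiv -\sum_{1\le i<j<k\le p-1}\frac{1}{ij^2k}\pmod{p}.$$
   Context: $H_n=\sum_{k=1}^n 1/k$. Congruences modulo $p$ are taken in the ring of rationals with denominators not divisible by $p$. *)

theory Defs
  imports Complex_Main "HOL-Computational_Algebra.Primes"
begin

definition H :: "nat \<Rightarrow> rat" where
  "H n = (\<Sum>k=1..n. 1 / of_nat k)"

text \<open>Congruence modulo p in the ring of rationals whose denominators are not divisible by p:
  a - b = c / d with p dividing c and p not dividing d.\<close>
definition rat_cong :: "rat \<Rightarrow> rat \<Rightarrow> nat \<Rightarrow> bool" where
  "rat_cong a b p \<longleftrightarrow> (\<exists>c d :: int. a - b = of_int c / of_int d \<and> int p dvd c \<and> \<not> int p dvd d)"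

end

theory Submission
  imports Defs "HOL-Number_Theory.Cong"
begin

(*
  Proof idea.  Write  S(w)_n = \<Sum>_{k\<le>n} H_{k-1}/k^w,  R(w)_n = \<Sum>_{k\<le>n} 1/k^w  and
  T_n = \<Sum>_{i<j<k\<le>n} 1/(i j^2 k).  An induction on n gives the exact identity

      \<Sum>_{k\<le>n} H_k^2/k^2 + T_n = H_n S(2)_n + S(3)_n + R(4)_n,

  so (with n = p-1) it suffices to show that the right-hand side is divisible by p.
  For this we clear denominators with N = (p-1)!: the numbers e_k = N/k (1 \<le> k \<le> p-1)
  are integers, and multiplying by powers of N turns H_{p-1}, S(w)_{p-1} and R(w)_{p-1}
  into integer sums in the e_k, while p does not divide N.  Modulo p the e_k satisfy
  e_{p-k} \<equiv> -e_k  and  2 e_{2k mod p} \<equiv> e_k.  The second relation, together with the fact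
  that k \<mapsto> 2k mod p permutes {1..p-1}, shows p | (2^m - 1) \<Sum> e_k^m, hence p | H_{p-1}
  (m = 1) and p | R(4)_{p-1} (m = 4, using p \<noteq> 3, 5).  The first relation, applied to
  \<Sum> e_k^3 E_{k-1} with E_m = \<Sum>_{j\<le>m} e_j, shows 2 S(3)_{p-1} \<equiv> -R(4)_{p-1} \<equiv> 0.
*)

section \<open>An exact identity for harmonic sums\<close>

definition harm_pow :: "nat \<Rightarrow> nat \<Rightarrow> rat" where
  "harm_pow w n = (\<Sum>k=1..n. H (k-1) / (of_nat k)^w)"

definition recip_pow :: "nat \<Rightarrow> nat \<Rightarrow> rat" where
  "recip_pow w n = (\<Sum>k=1..n. 1 / (of_nat k)^w)"

definition triple_sum :: "nat \<Rightarrow> rat" where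
  "triple_sum n = (\<Sum>k=1..n. harm_pow 2 (k-1) / of_nat k)"

lemma H_Suc: "H (Suc n) = H n + 1 / of_nat (Suc n)"
  by (simp add: H_def)

text \<open>The increments of both sides of the identity below agree; this is the inductive step.\<close>

lemma harmonic_square_step:
  fixes h x t :: rat
  assumes "x \<noteq> 0"
  shows "(h + 1/x)^2 / x^2 + t / x
           = (h + 1/x) * (t + h / x^2) - h * t + h / x^3 + 1 / x^4"
  using assms by (simp add: field_simps) (simp add: eval_nat_numeral algebra_simps)

lemma harmonic_square_identity:
  "(\<Sum>k=1..n. (H k)^2 / (of_nat k)^2) + triple_sum n
     = H n * harm_pow 2 n + harm_pow 3 n + recip_pow 4 n"
proof (induction n)
  case 0
  show ?case by (simp add: H_def triple_sum_def harm_pow_def recip_pow_def)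
next
  case (Suc n)
  let ?x = "of_nat (Suc n) :: rat"
  have "(\<Sum>k=1..Suc n. (H k)^2 / (of_nat k)^2) + triple_sum (Suc n)
      = ((\<Sum>k=1..n. (H k)^2 / (of_nat k)^2) + triple_sum n)
        + ((H n + 1/?x)^2 / ?x^2 + harm_pow 2 n / ?x)"
    by (simp add: triple_sum_def H_Suc)
  also have "\<dots> = H n * harm_pow 2 n + harm_pow 3 n + recip_pow 4 n
      + ((H n + 1/?x) * (harm_pow 2 n + H n / ?x^2) - H n * harm_pow 2 n + H n / ?x^3 + 1 / ?x^4)"
    by (simp only: Suc.IH harmonic_square_step[OF of_nat_neq_0])
  also have "\<dots> = H (Suc n) * harm_pow 2 (Suc n) + harm_pow 3 (Suc n) + recip_pow 4 (Suc n)"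
    by (simp add: harm_pow_def recip_pow_def H_Suc)
  finally show ?case .
qed

lemma triple_sum_eq:
  "(\<Sum>(i,j,k)\<in>{(i,j,k). 1 \<le> i \<and> i < j \<and> j < k \<and> k \<le> n}.
      1 / (of_nat i * (of_nat j)^2 * of_nat k) :: rat) = triple_sum n"
proof -
  let ?f = "\<lambda>(i,j,k). 1 / (of_nat i * (of_nat j)^2 * of_nat k) :: rat"
  let ?swap = "\<lambda>(k::nat, j::nat, i::nat). (i, j, k)"
  let ?S = "SIGMA k:{1..n}. SIGMA j:{1..<k}. {1..<j}"
  have "{(i,j,k). 1 \<le> i \<and> i < j \<and> j < k \<and> k \<le> n} = ?swap ` ?S"
    by (auto simp: image_iff)
  moreover have "inj_on ?swap ?S"
    by (auto simp: inj_on_def)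
  ultimately have "(\<Sum>x\<in>{(i,j,k). 1 \<le> i \<and> i < j \<and> j < k \<and> k \<le> n}. ?f x)
      = (\<Sum>k=1..n. \<Sum>j=1..<k. \<Sum>i=1..<j. 1 / of_nat i / (of_nat j)^2 / of_nat k)"
    by (simp add: sum.reindex sum.Sigma split_def divide_divide_eq_left mult.assoc)
  also have "\<dots> = triple_sum n"
  proof -
    have interval: "{Suc 0..<j} = {Suc 0..j - Suc 0}" for j :: nat
      by (cases j) auto
    show ?thesis
      by (simp add: triple_sum_def harm_pow_def H_def interval sum_divide_distrib)
  qed
  finally show ?thesis .
qed

section \<open>Clearing denominators with \<open>(p-1)!\<close>\<close>

text \<open>For \<open>1 \<le> k \<le> p-1\<close>, \<open>cofact p k = (p-1)!/k\<close> is an integer: the integer that stands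
  for \<open>1/k\<close> after scaling by \<open>(p-1)!\<close>.  \<open>cofact_partial p m\<close> is the scaled harmonic
  number \<open>(p-1)! H_m\<close>.\<close>

definition cofact :: "nat \<Rightarrow> nat \<Rightarrow> int" where
  "cofact p k = fact (p-1) div int k"

definition cofact_partial :: "nat \<Rightarrow> nat \<Rightarrow> int" where
  "cofact_partial p m = (\<Sum>k=1..m. cofact p k)"

lemma cofact_mult:
  assumes "1 \<le> k" "k \<le> p - 1"
  shows "int k * cofact p k = fact (p-1)"
proof -
  have "int k dvd fact (p-1)"
    using dvd_fact[OF assms] by (metis of_nat_dvd_iff of_nat_fact)
  then show ?thesis
    unfolding cofact_def by simp
qed

lemma of_int_cofact:
  assumes "1 \<le> k" "k \<le> p - 1"
  shows "(of_int (cofact p k) :: rat) = fact (p-1) / of_nat k"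
proof -
  have "(of_int (int k * cofact p k) :: rat) = fact (p-1)"
    using cofact_mult[OF assms] by (metis of_int_fact)
  then show ?thesis
    using assms by (simp add: field_simps)
qed

lemma prime_not_dvd_fact_pred: "prime p \<Longrightarrow> \<not> int p dvd fact (p-1)"
  using prime_dvd_fact_iff[of p "p-1"] prime_gt_0_nat[of p]
  by (metis diff_less int_dvd_int_iff less_numeral_extra(1) not_le of_nat_fact)

lemma scaled_H:
  assumes "m \<le> p - 1"
  shows "fact (p-1) * H m = of_int (cofact_partial p m)"
proof -
  have "fact (p-1) * H m = (\<Sum>k=1..m. fact (p-1) / (of_nat k :: rat))"
    unfolding H_def by (simp add: sum_distrib_left)
  also have "\<dots> = (\<Sum>k=1..m. of_int (cofact p k))"
    using assms by (intro sum.cong) (auto simp: of_int_cofact)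
  finally show ?thesis
    by (simp add: cofact_partial_def)
qed

lemma scaled_harm_pow:
  "(fact (p-1))^(Suc w) * harm_pow w (p-1)
     = of_int (\<Sum>k=1..p-1. (cofact p k)^w * cofact_partial p (k-1))"
proof -
  let ?N = "fact (p-1) :: rat"
  have "?N^(Suc w) * harm_pow w (p-1) = (\<Sum>k=1..p-1. (?N / of_nat k)^w * (?N * H (k-1)))"
    unfolding harm_pow_def sum_distrib_left
    by (intro sum.cong) (auto simp: field_simps)
  also have "\<dots> = (\<Sum>k=1..p-1. of_int ((cofact p k)^w * cofact_partial p (k-1)))"
  proof (intro sum.cong refl)
    fix k assume k: "k \<in> {1..p-1}"
    then have "k - 1 \<le> p - 1"
      by (meson atLeastAtMost_iff diff_le_self order_trans)
    then show "(?N / of_nat k)^w * (?N * H (k-1)) = of_int ((cofact p k)^w * cofact_partial p (k-1))"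
      using k of_int_cofact[of k p] scaled_H[of "k-1" p] by simp
  qed
  finally show ?thesis
    by simp
qed

lemma scaled_recip_pow:
  "(fact (p-1))^w * recip_pow w (p-1) = of_int (\<Sum>k=1..p-1. (cofact p k)^w)"
proof -
  let ?N = "fact (p-1) :: rat"
  have "?N^w * recip_pow w (p-1) = (\<Sum>k=1..p-1. (?N / of_nat k)^w)"
    unfolding recip_pow_def sum_distrib_left
    by (intro sum.cong) (auto simp: field_simps)
  also have "\<dots> = (\<Sum>k=1..p-1. of_int ((cofact p k)^w))"
    by (intro sum.cong) (auto simp: of_int_cofact)
  finally show ?thesis
    by simp
qed

section \<open>Congruences for the cofactors\<close>

text \<open>If \<open>a k \<equiv> l\<close> then \<open>a \<cdot> (p-1)!/l \<equiv> (p-1)!/k\<close>: the cofactors behave like inverses.\<close>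

lemma cofact_cong:
  assumes "prime p" "k \<in> {1..p-1}" "l \<in> {1..p-1}" "[a * int k = int l] (mod int p)"
  shows "[a * cofact p l = cofact p k] (mod int p)"
proof -
  have "[a * int k * cofact p l = int l * cofact p l] (mod int p)"
    using cong_mult[OF assms(4) cong_refl[of "cofact p l"]] .
  then have "[int k * (a * cofact p l) = int l * cofact p l] (mod int p)"
    by (simp add: ac_simps)
  also have "int l * cofact p l = int k * cofact p k"
    using assms(2,3) by (simp add: cofact_mult)
  finally have "[int k * (a * cofact p l) = int k * cofact p k] (mod int p)" .
  moreover have "coprime (int k) (int p)"
  proof -
    have "\<not> p dvd k"
      using assms(2) by (intro nat_dvd_not_less) auto
    then show ?thesis
      using prime_imp_coprime[OF assms(1)] by (simp add: coprime_commute)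
  qed
  ultimately show ?thesis
    by (simp add: cong_mult_lcancel)
qed

lemma cofact_reflect:
  assumes "prime p" "k \<in> {1..p-1}"
  shows "[cofact p (p-k) = - cofact p k] (mod int p)"
proof -
  have "int (p-k) = int p - int k"
    using assms(2) by auto
  then have "[- 1 * int k = int (p-k)] (mod int p)"
    by (simp add: cong_iff_dvd_diff)
  then have "[- 1 * cofact p (p-k) = cofact p k] (mod int p)"
    using assms by (intro cofact_cong) auto
  then show ?thesis
    by (metis cong_minus_minus_iff minus_minus mult_minus1)
qed

lemma mult_mod_permutes:
  fixes p a :: nat
  assumes "prime p" "\<not> p dvd a"
  shows "(\<lambda>k. a * k mod p) ` {1..p-1} = {1..p-1}"
proof (rule endo_inj_surj)
  have "p > 0" using prime_gt_0_nat[OF assms(1)] .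
  show "(\<lambda>k. a * k mod p) ` {1..p-1} \<subseteq> {1..p-1}"
  proof clarify
    fix k assume k: "k \<in> {1..p-1}"
    have "\<not> p dvd k" using k by (intro nat_dvd_not_less) auto
    then have "\<not> p dvd a * k" using assms prime_dvd_mult_iff by blast
    moreover have "a * k mod p < p" using \<open>p > 0\<close> by simp
    ultimately show "a * k mod p \<in> {1..p-1}" by (auto simp: dvd_eq_mod_eq_0)
  qed
  show "inj_on (\<lambda>k. a * k mod p) {1..p-1}"
  proof (rule inj_onI)
    fix k l assume "k \<in> {1..p-1}" "l \<in> {1..p-1}" "a * k mod p = a * l mod p"
    moreover have "coprime p a" using assms prime_imp_coprime by blast
    ultimately have "[k = l] (mod p)"
      by (metis cong_def cong_mult_lcancel_nat coprime_commute)
    then show "k = l" using \<open>k \<in> _\<close> \<open>l \<in> _\<close> \<open>p > 0\<close> cong_less_modulus_unique_nat by auto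
  qed
qed simp

text \<open>Doubling the index: \<open>p\<close> divides \<open>(2^m - 1) \<Sum> e_k^m\<close> for every odd prime \<open>p\<close>.\<close>

lemma cofact_power_sum_dvd:
  assumes "prime p" "p \<noteq> 2"
  shows "int p dvd (2^m - 1) * (\<Sum>k=1..p-1. (cofact p k)^m)"
proof -
  let ?dbl = "\<lambda>k. 2 * k mod p"
  have not2: "\<not> p dvd 2"
    using assms primes_dvd_imp_eq two_is_prime_nat by blast
  have perm: "?dbl ` {1..p-1} = {1..p-1}"
    using mult_mod_permutes[OF assms(1) not2] .
  then have inj: "inj_on ?dbl {1..p-1}"
    by (intro eq_card_imp_inj_on) auto
  have "(\<Sum>k=1..p-1. (cofact p k)^m) = (\<Sum>k=1..p-1. (cofact p (?dbl k))^m)"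
    using sum.reindex[OF inj, of "\<lambda>k. (cofact p k)^m"] perm by simp
  then have "2^m * (\<Sum>k=1..p-1. (cofact p k)^m) = (\<Sum>k=1..p-1. (2 * cofact p (?dbl k))^m)"
    by (simp add: sum_distrib_left power_mult_distrib)
  also have "[\<dots> = (\<Sum>k=1..p-1. (cofact p k)^m)] (mod int p)"
  proof (intro cong_sum cong_pow cofact_cong[OF assms(1)])
    fix k assume k: "k \<in> {1..p-1}"
    show "?dbl k \<in> {1..p-1}" using perm k by blast
    show "[2 * int k = int (?dbl k)] (mod int p)"
      by (simp add: cong_def zmod_int)
  qed (simp_all)
  finally show ?thesis
    by (simp add: cong_iff_dvd_diff algebra_simps)
qed

lemma cofact_partial_reflect:
  assumes "prime p" "int p dvd cofact_partial p (p-1)" "k \<le> p - 1"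
  shows "[cofact_partial p (p-1-k) = cofact_partial p k] (mod int p)"
  using assms(3)
proof (induction k)
  case 0
  then show ?case
    using assms(2) by (simp add: cofact_partial_def cong_0_iff)
next
  case (Suc k)
  have pred: "p-1-k = Suc (p-1-Suc k)"
    using Suc.prems by simp
  have split: "cofact_partial p (p-1-k) = cofact_partial p (p-1-Suc k) + cofact p (p - Suc k)"
    unfolding cofact_partial_def pred using pred by simp
  have "[cofact_partial p (p-1-k) - cofact p (p - Suc k) = cofact_partial p k - - cofact p (Suc k)]
          (mod int p)"
    using Suc cofact_reflect[OF assms(1), of "Suc k"] by (intro cong_diff) auto
  moreover have "cofact_partial p (p-1-k) - cofact p (p - Suc k) = cofact_partial p (p-1-Suc k)"
    using split by simp
  moreover have "cofact_partial p k - - cofact p (Suc k) = cofact_partial p (Suc k)"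
    by (simp add: cofact_partial_def)
  ultimately show ?case
    by simp
qed

text \<open>For odd \<open>m\<close>: \<open>p | 2 \<Sum> e_k^m E_{k-1} + \<Sum> e_k^{m+1}\<close>, by pairing \<open>k\<close> with \<open>p-k\<close>.\<close>

lemma cofact_mixed_sum_dvd:
  assumes "prime p" "int p dvd cofact_partial p (p-1)" "odd m"
  shows "int p dvd 2 * (\<Sum>k=1..p-1. (cofact p k)^m * cofact_partial p (k-1))
                   + (\<Sum>k=1..p-1. (cofact p k)^Suc m)"
proof -
  let ?e = "cofact p" and ?E = "cofact_partial p"
  have "(\<Sum>k=1..p-1. ?e k^m * ?E (k-1)) = (\<Sum>k=1..p-1. ?e (p-k)^m * ?E (p-1-k))"
    using sum.atLeastAtMost_rev[of "\<lambda>k. ?e k^m * ?E (k-1)" 1 "p-1"] prime_gt_0_nat[OF assms(1)]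
    by (simp add: diff_diff_add add.commute)
  also have "[\<dots> = (\<Sum>k=1..p-1. (- ?e k)^m * ?E k)] (mod int p)"
    using assms(1,2) by (intro cong_sum cong_mult cong_pow cofact_reflect cofact_partial_reflect) auto
  also have "(\<Sum>k=1..p-1. (- ?e k)^m * ?E k)
      = - (\<Sum>k=1..p-1. ?e k^m * ?E (k-1)) - (\<Sum>k=1..p-1. ?e k^Suc m)"
  proof -
    have "(- ?e k)^m * ?E k = - (?e k^m * ?E (k-1)) - ?e k^Suc m" if "k \<in> {1..p-1}" for k
      using that assms(3) by (cases k) (simp_all add: cofact_partial_def algebra_simps)
    then show ?thesis
      by (simp add: sum_subtractf sum_negf)
  qed
  finally show ?thesis
    by (simp add: cong_iff_dvd_diff algebra_simps)
qed

section \<open>Vanishing modulo \<open>p\<close>\<close>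

lemma harmonic_numerator_dvd:
  assumes "prime p" "p \<noteq> 2"
  shows "int p dvd cofact_partial p (p-1)"
  using cofact_power_sum_dvd[OF assms, of 1] by (simp add: cofact_partial_def)

lemma prime_dvd_cancel:
  fixes c :: nat
  assumes "prime p" "\<not> p dvd c" "int p dvd int c * x"
  shows "int p dvd x"
  using assms prime_dvd_mult_iff[of "int p" "int c" x] by simp

lemma fourth_power_sum_dvd:
  assumes "prime p" "p \<ge> 7"
  shows "int p dvd (\<Sum>k=1..p-1. (cofact p k)^4)"
proof (rule prime_dvd_cancel[OF assms(1)])
  show "\<not> p dvd 15"
  proof
    assume "p dvd 15"
    then have "p dvd 3 \<or> p dvd 5"
      using assms(1) prime_dvd_mult_iff[of p 3 5] by simp
    then show False
      using assms(2) by (auto dest: dvd_imp_le)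
  qed
  have "p \<noteq> 2"
    using assms(2) by simp
  then have "int p dvd (2^4 - 1) * (\<Sum>k=1..p-1. (cofact p k)^4)"
    by (rule cofact_power_sum_dvd[OF assms(1)])
  then show "int p dvd int 15 * (\<Sum>k=1..p-1. (cofact p k)^4)"
    by simp
qed

lemma cubic_mixed_sum_dvd:
  assumes "prime p" "p \<ge> 7"
  shows "int p dvd (\<Sum>k=1..p-1. (cofact p k)^3 * cofact_partial p (k-1))"
proof (rule prime_dvd_cancel[OF assms(1)])
  show "\<not> p dvd 2"
    using assms(2) by (auto dest: dvd_imp_le)
  have "p \<noteq> 2"
    using assms(2) by simp
  then have "int p dvd 2 * (\<Sum>k=1..p-1. (cofact p k)^3 * cofact_partial p (k-1))
                    + (\<Sum>k=1..p-1. (cofact p k)^Suc 3)"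
    using cofact_mixed_sum_dvd[OF assms(1) harmonic_numerator_dvd[OF assms(1)], of 3] by simp
  then show "int p dvd int 2 * (\<Sum>k=1..p-1. (cofact p k)^3 * cofact_partial p (k-1))"
    using fourth_power_sum_dvd[OF assms] by (simp add: dvd_add_left_iff)
qed

theorem lemma2p8:
  fixes p :: nat
  assumes "prime p" and "p \<ge> 7"
  shows "rat_cong (\<Sum>k=1..p-1. (H k)^2 / (of_nat k)^2)
           (- (\<Sum>(i,j,k)\<in>{(i,j,k). 1 \<le> i \<and> i < j \<and> j < k \<and> k \<le> p-1}.
                 1 / (of_nat i * (of_nat j)^2 * of_nat k))) p"
proof -
  let ?N = "fact (p-1) :: int"
  define c where "c = cofact_partial p (p-1) * (\<Sum>k=1..p-1. (cofact p k)^2 * cofact_partial p (k-1))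
    + (\<Sum>k=1..p-1. (cofact p k)^3 * cofact_partial p (k-1)) + (\<Sum>k=1..p-1. (cofact p k)^4)"
  have "(\<Sum>k=1..p-1. (H k)^2 / (of_nat k)^2)
      - (- (\<Sum>(i,j,k)\<in>{(i,j,k). 1 \<le> i \<and> i < j \<and> j < k \<and> k \<le> p-1}.
                 1 / (of_nat i * (of_nat j)^2 * of_nat k)))
      = H (p-1) * harm_pow 2 (p-1) + harm_pow 3 (p-1) + recip_pow 4 (p-1)" (is "?D = _")
    unfolding triple_sum_eq using harmonic_square_identity[of "p-1"] by simp
  also have "\<dots> = of_int c / of_int (?N^4)"
    using scaled_H[of "p-1" p] scaled_harm_pow[of p 2] scaled_harm_pow[of p 3] scaled_recip_pow[of p 4]
    by (simp add: c_def field_simps eval_nat_numeral)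
  finally have difference: "?D = of_int c / of_int (?N^4)" .
  have "int p dvd c"
    unfolding c_def using harmonic_numerator_dvd[OF assms(1)] cubic_mixed_sum_dvd[OF assms]
      fourth_power_sum_dvd[OF assms] assms(2) by (simp add: dvd_add dvd_mult2)
  moreover have "\<not> int p dvd ?N^4"
    using prime_not_dvd_fact_pred[OF assms(1)] prime_dvd_power[of "int p" ?N 4] assms(1) by auto
  ultimately show ?thesis
    unfolding rat_cong_def using difference by blast
qed

end
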